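(* Let $\gamma>0$, $\mu\in\mathbb R\setminus\{0\}$, let $R^\gamma$ be a Bessel process of dimension $\gamma$ started at $0$, and let $T^\mu_t=\inf\{s:B_\mu(s)=t\}$, where $B_\mu(s)=B(s)+\mu s$ is a Brownian motion with drift $\mu$ independent of $R^\gamma$, whose first-passage density is $\Pr\{T^\mu_t\in ds\}/ds=\frac{t\,e^{-(t-\mu s)^2/(2s)}}{\sqrt{2\pi s^3}}$. Then for $r>0$, $t>0$, $$\Pr\{R^\gamma(T^\mu_t)\in dr\}/dr=\frac{4t\,e^{t\mu}r^{\gamma-1}}{2^{\gamma/2}\Gamma\left(\frac\gamma2\right)\sqrt{2\pi}}\left(\frac{\mu^2}{r^2+t^2}\right)^{\frac{\gamma+1}{4}}K_{\frac{\gamma+1}{2}}\left(|\mu|\sqrt{r^2+t^2}\right).$$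
   Context: $K_\nu$ denotes the modified Bessel function of the second kind of order $\nu$. A Bessel process of dimension $\gamma$ started at $0$ has density $\frac{2r^{\gamma-1}e^{-r^2/(2t)}}{(2t)^{\gamma/2}\Gamma(\gamma/2)}$, $r\ge0$, at time $t>0$. For $\mu<0$ the first-passage time may be infinite and the expression is a sub-probability density. *)

theory Defs
  imports "HOL-Analysis.Analysis"
begin

text \<open>Modified Bessel function of the second kind, via the standard integral
representation K_nu(x) = int_0^infty exp(-x cosh u) cosh(nu u) du, valid for x > 0.\<close>
definition besselK :: "real \<Rightarrow> real \<Rightarrow> real" where
  "besselK \<nu> x = (LBINT u:{0<..}. exp (- x * cosh u) * cosh (\<nu> * u))"

definition bessel_density :: "real \<Rightarrow> real \<Rightarrow> real \<Rightarrow> real" where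
  "bessel_density \<gamma> t r =
     2 * r powr (\<gamma> - 1) * exp (- r\<^sup>2 / (2 * t)) / ((2 * t) powr (\<gamma> / 2) * Gamma (\<gamma> / 2))"

text \<open>(Sub-)density of the first passage time of level t by B(s) + mu s.\<close>
definition fpt_density :: "real \<Rightarrow> real \<Rightarrow> real \<Rightarrow> real" where
  "fpt_density \<mu> t s = t * exp (- (t - \<mu> * s)\<^sup>2 / (2 * s)) / sqrt (2 * pi * s ^ 3)"

end

theory Submission
  imports Defs
begin

text \<open>For fixed \<open>r, t\<close> the product of the two densities is a constant times
  \<open>s powr p * exp (- a / s - b * s)\<close> with \<open>p = - (\<gamma> + 3) / 2\<close>, \<open>a = (r\<^sup>2 + t\<^sup>2) / 2\<close>, \<open>b = \<mu>\<^sup>2 / 2\<close>.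
  The substitution \<open>s = sqrt (a / b) * exp u\<close> maps \<open>u \<in> \<real>\<close> onto \<open>s > 0\<close> and turns the integrand into
  \<open>(a / b) powr ((p + 1) / 2) * exp ((p + 1) * u - 2 * sqrt (a * b) * cosh u)\<close>, whose integral over
  the line is twice \<open>besselK (p + 1) (2 * sqrt (a * b))\<close>; since \<open>besselK\<close> is even in the order, this
  is the claimed density.\<close>

lemma square_div_8_le_cosh:
  fixes u :: real
  assumes "u \<ge> 0"
  shows "u\<^sup>2 / 8 \<le> cosh u"
proof -
  have "(1 + u / 2)\<^sup>2 \<le> (exp (u / 2))\<^sup>2"
    using exp_ge_add_one_self[of "u / 2"] assms by (intro power_mono) auto
  also have "\<dots> = exp u" by (simp add: power2_eq_square flip: exp_add)
  finally have "u\<^sup>2 / 4 \<le> exp u"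
    using assms by (simp add: power2_eq_square field_simps)
  hence "u\<^sup>2 / 4 \<le> exp u + exp (- u)" by (rule add_increasing2[rotated]) simp
  thus ?thesis by (simp add: cosh_def)
qed

lemma exp_linear_minus_cosh_le:
  fixes x k u :: real
  assumes x: "x > 0" and u: "u \<ge> 0"
  shows "exp (k * u - x * cosh u) \<le> exp (2 * (\<bar>k\<bar> + 1)\<^sup>2 / x) * exp (- u)"
proof -
  define a where "a = \<bar>k\<bar> + 1"
  have "x * (u\<^sup>2 / 8) \<le> x * cosh u"
    using square_div_8_le_cosh[OF u] x by (simp add: mult_left_mono)
  moreover have "k * u \<le> \<bar>k\<bar> * u" using u by (simp add: abs_ge_self mult_right_mono)
  moreover have "a * u - x * u\<^sup>2 / 8 \<le> 2 * a\<^sup>2 / x"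
  proof -
    \<comment> \<open>complete the square: \<open>0 \<le> (4 a - x u)\<^sup>2\<close>\<close>
    have "8 * x * (a * u - x * u\<^sup>2 / 8) \<le> 16 * a\<^sup>2"
      using zero_le_power2[of "4 * a - x * u"] by (simp add: algebra_simps power2_eq_square)
    thus ?thesis using x by (simp add: field_simps)
  qed
  ultimately have "k * u - x * cosh u \<le> 2 * a\<^sup>2 / x + (- u)"
    unfolding a_def by (simp add: algebra_simps)
  thus ?thesis unfolding a_def by (simp flip: exp_add)
qed

lemma absolutely_integrable_exp_linear_minus_cosh:
  fixes x k :: real
  assumes x: "x > 0"
  shows "(\<lambda>u. exp (k * u - x * cosh u)) absolutely_integrable_on {0<..}"
proof (rule measurable_bounded_by_integrable_imp_absolutely_integrable)
  show "(\<lambda>u. exp (k * u - x * cosh u)) \<in> borel_measurable (lebesgue_on {0<..})"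
    by (intro continuous_imp_measurable_on_sets_lebesgue continuous_intros) auto
  have "((\<lambda>u::real. exp (- 1 * u)) has_integral exp (- 1 * 0) / 1) {0..}"
    by (rule has_integral_exp_minus_to_infinity) simp
  hence "(\<lambda>u::real. exp (- u)) integrable_on {0..}" by (auto simp: integrable_on_def)
  hence "(\<lambda>u::real. exp (- u)) integrable_on {0<..}"
    by (rule integrable_spike_set) (auto intro: negligible_subset[of "{0}"])
  thus "(\<lambda>u. exp (2 * (\<bar>k\<bar> + 1)\<^sup>2 / x) * exp (- u)) integrable_on {0<..}"
    using integrable_on_cmult_left[of _ "{0<..}" "exp (2 * (\<bar>k\<bar> + 1)\<^sup>2 / x)"] by simp
  show "norm (exp (k * u - x * cosh u)) \<le> exp (2 * (\<bar>k\<bar> + 1)\<^sup>2 / x) * exp (- u)"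
    if "u \<in> {0<..}" for u
    using exp_linear_minus_cosh_le[OF x, of u k] that by simp
qed simp

lemma has_integral_exp_linear_minus_cosh_Ioi:
  fixes x k :: real
  assumes x: "x > 0"
  shows "((\<lambda>u. exp (k * u - x * cosh u) + exp (- k * u - x * cosh u)) has_integral 2 * besselK k x) {0<..}"
proof -
  let ?f = "\<lambda>u. exp (k * u - x * cosh u) + exp (- k * u - x * cosh u)"
  let ?h = "\<lambda>u. exp (- x * cosh u) * cosh (k * u)"
  have f: "?f integrable_on {0<..}"
    using absolutely_integrable_exp_linear_minus_cosh[OF x, of k]
      absolutely_integrable_exp_linear_minus_cosh[OF x, of "- k"]
    by (intro integrable_add) (auto dest: set_lebesgue_integral_eq_integral(1))
  have h_eq: "?h = (\<lambda>u. (1 / 2) * ?f u)"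
    by (rule ext) (simp add: cosh_def field_simps flip: exp_add)
  have "?h integrable_on {0<..}"
    using integrable_on_cmult_left[OF f, of "1 / 2"] unfolding h_eq by simp
  hence "?h absolutely_integrable_on {0<..}"
    by (subst absolutely_integrable_on_iff_nonneg) (auto simp: cosh_def)
  moreover have "?h \<in> borel_measurable borel"
    by (intro borel_measurable_continuous_onI continuous_intros)
  ultimately have "set_integrable lborel {0<..} ?h"
    unfolding set_integrable_def by (subst (asm) integrable_completion) auto
  hence "besselK k x = integral {0<..} ?h"
    unfolding besselK_def by (rule set_borel_integral_eq_integral(2))
  also have "\<dots> = integral {0<..} ?f / 2"
    unfolding h_eq using integral_cmul[of "{0<..}" "1 / 2" ?f] by simp
  finally have "integral {0<..} ?f = 2 * besselK k x" by simp
  with f show ?thesis by (metis integrable_integral)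
qed

lemma has_integral_reflect_Ioi:
  fixes f :: "real \<Rightarrow> real"
  assumes f: "f absolutely_integrable_on {0<..}"
  shows "((\<lambda>u. f (- u)) has_integral integral {0<..} f) {..<0}"
proof -
  have image: "uminus ` {..<0::real} = {0<..}"
    by simp
  have "(\<lambda>u. \<bar>- 1\<bar> * f (- u)) absolutely_integrable_on {..<0} \<and>
        integral {..<0} (\<lambda>u. \<bar>- 1\<bar> * f (- u)) = integral {0<..} f"
  proof (subst has_absolute_integral_change_of_variables_1'[where g = uminus])
    show "((\<lambda>u. - u) has_field_derivative - 1) (at u within {..<0})" for u :: real
      by (auto intro!: derivative_eq_intros)
    show "inj_on uminus {..<0::real}" by (simp add: inj_on_def)
    show "f absolutely_integrable_on uminus ` {..<0} \<and>
      integral (uminus ` {..<0}) f = integral {0<..} f"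
      unfolding image using f by simp
  qed simp
  hence "(\<lambda>u. f (- u)) integrable_on {..<0}" and "integral {..<0} (\<lambda>u. f (- u)) = integral {0<..} f"
    by (auto dest: set_lebesgue_integral_eq_integral(1))
  thus ?thesis by (metis integrable_integral)
qed

lemma has_integral_Iio_Ioi_UNIV:
  fixes f :: "real \<Rightarrow> real"
  assumes "(f has_integral I) {..<0}" and "(f has_integral J) {0<..}"
  shows "(f has_integral I + J) UNIV"
proof -
  have "(f has_integral I + J) ({..<0} \<union> {0<..})"
  proof (rule has_integral_Un[OF assms])
    have "{..<0::real} \<inter> {0<..} = {}" by auto
    thus "negligible ({..<0::real} \<inter> {0<..})" by simp
  qed
  moreover have "negligible {u \<in> UNIV - ({..<0} \<union> {0<..}). f u \<noteq> 0}"
    by (rule negligible_subset[of "{0}"]) auto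
  ultimately show ?thesis
    by (subst has_integral_spike_set_eq[where T = "{..<0} \<union> {0<..}"]) simp_all
qed

lemma has_integral_exp_linear_minus_cosh:
  fixes x k :: real
  assumes x: "x > 0"
  shows "((\<lambda>u. exp (k * u - x * cosh u)) has_integral 2 * besselK k x) UNIV"
proof -
  let ?f = "\<lambda>k u. exp (k * u - x * cosh u)"
  have integrable: "?f k integrable_on {0<..}" for k
    using absolutely_integrable_exp_linear_minus_cosh[OF x] set_lebesgue_integral_eq_integral(1) by blast
  have "((\<lambda>u. ?f (- k) (- u)) has_integral integral {0<..} (?f (- k))) {..<0}"
    by (rule has_integral_reflect_Ioi[OF absolutely_integrable_exp_linear_minus_cosh[OF x]])
  hence negative: "(?f k has_integral integral {0<..} (?f (- k))) {..<0}" by simp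
  have positive: "(?f k has_integral integral {0<..} (?f k)) {0<..}"
    using integrable by (rule integrable_integral)
  have sum: "integral {0<..} (?f (- k)) + integral {0<..} (?f k) = 2 * besselK k x"
  proof -
    have "((\<lambda>u. ?f k u + ?f (- k) u) has_integral integral {0<..} (?f k) + integral {0<..} (?f (- k))) {0<..}"
      using integrable by (intro has_integral_add integrable_integral)
    with has_integral_exp_linear_minus_cosh_Ioi[OF x, of k] show ?thesis
      using has_integral_unique by (simp add: add.commute)
  qed
  show ?thesis using has_integral_Iio_Ioi_UNIV[OF negative positive] unfolding sum .
qed

lemma besselK_minus: "besselK (-\<nu>) x = besselK \<nu> x"
  unfolding besselK_def by simp

lemma has_integral_powr_mult_exp_besselK:
  fixes a b p :: real
  assumes a: "a > 0" and b: "b > 0"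
  shows "((\<lambda>s. s powr p * exp (- a / s - b * s)) has_integral
           2 * (a / b) powr ((p + 1) / 2) * besselK (p + 1) (2 * sqrt (a * b))) {0<..}"
proof -
  define c where "c = sqrt (a / b)"
  define q where "q = sqrt (a * b)"
  have c: "c > 0" and q: "q > 0" using a b by (auto simp: c_def q_def)
  have qc: "q * c = a" and qdc: "q / c = b"
    using a b by (auto simp: c_def q_def real_sqrt_mult[symmetric] real_sqrt_divide[symmetric] field_simps)
  have cp: "c powr (p + 1) = (a / b) powr ((p + 1) / 2)"
    using a b by (simp add: c_def powr_half_sqrt[symmetric] powr_powr)
  let ?f = "\<lambda>s. s powr p * exp (- a / s - b * s)"
  let ?G = "\<lambda>u. c powr (p + 1) * exp ((p + 1) * u - (2 * q) * cosh u)"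
  have jacobian: "\<bar>c * exp u\<bar> * ?f (c * exp u) = ?G u" for u
  proof -
    have exponent: "- a / (c * exp u) - b * (c * exp u) = - (2 * q) * cosh u"
      using c by (simp add: cosh_def exp_minus field_simps flip: qc qdc)
    have power: "\<bar>c * exp u\<bar> * (c * exp u) powr p = c powr (p + 1) * exp ((p + 1) * u)"
      using c by (simp add: powr_mult powr_add exp_powr_real algebra_simps flip: exp_add)
    have "\<bar>c * exp u\<bar> * ?f (c * exp u)
        = (\<bar>c * exp u\<bar> * (c * exp u) powr p) * exp (- a / (c * exp u) - b * (c * exp u))"
      by (simp only: mult.assoc)
    also have "\<dots> = c powr (p + 1) * (exp ((p + 1) * u) * exp (- (2 * q) * cosh u))"
      by (simp only: exponent power mult.assoc)
    also have "\<dots> = ?G u"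
      by (simp only: exp_add[symmetric] diff_conv_add_uminus mult_minus_left)
    finally show ?thesis .
  qed
  have hG: "(?G has_integral c powr (p + 1) * (2 * besselK (p + 1) (2 * q))) UNIV"
    using has_integral_mult_right[OF has_integral_exp_linear_minus_cosh[of "2 * q" "p + 1"]] q by simp
  hence aG: "?G absolutely_integrable_on UNIV"
    using absolutely_integrable_on_iff_nonneg[of UNIV ?G] by (auto simp: integrable_on_def)
  have img: "range (\<lambda>u. c * exp u) = {0<..}"
  proof
    show "{0<..} \<subseteq> range (\<lambda>u. c * exp u)"
    proof
      fix s :: real assume "s \<in> {0<..}"
      hence "s = c * exp (ln (s / c))" using c by simp
      thus "s \<in> range (\<lambda>u. c * exp u)" by blast
    qed
  qed (use c in auto)
  have "?f absolutely_integrable_on range (\<lambda>u. c * exp u) \<and>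
        integral (range (\<lambda>u. c * exp u)) ?f = c powr (p + 1) * (2 * besselK (p + 1) (2 * q))"
  proof (subst has_absolute_integral_change_of_variables_1'[symmetric, where g' = "\<lambda>u. c * exp u"])
    show "((\<lambda>u. c * exp u) has_field_derivative c * exp u) (at u within UNIV)" for u
      by (auto intro!: derivative_eq_intros)
    show "inj_on (\<lambda>u. c * exp u) UNIV" using c by (simp add: inj_on_def)
    show "(\<lambda>u. \<bar>c * exp u\<bar> * ?f (c * exp u)) absolutely_integrable_on UNIV \<and>
      integral UNIV (\<lambda>u. \<bar>c * exp u\<bar> * ?f (c * exp u)) = c powr (p + 1) * (2 * besselK (p + 1) (2 * q))"
      unfolding jacobian using aG integral_unique[OF hG] by blast
  qed simp
  hence "(?f has_integral c powr (p + 1) * (2 * besselK (p + 1) (2 * q))) {0<..}"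
    unfolding img using set_lebesgue_integral_eq_integral(1) integrable_integral by metis
  thus ?thesis unfolding cp q_def by (simp only: mult.left_commute mult.assoc)
qed

lemma bessel_density_mult_fpt_density:
  fixes \<gamma> \<mu> t r s :: real
  assumes \<gamma>: "\<gamma> > 0" and s: "s > 0"
  shows "bessel_density \<gamma> s r * fpt_density \<mu> t s
    = 2 * t * exp (t * \<mu>) * r powr (\<gamma> - 1) / (2 powr (\<gamma> / 2) * Gamma (\<gamma> / 2) * sqrt (2 * pi))
      * (s powr (- (\<gamma> + 3) / 2) * exp (- ((r\<^sup>2 + t\<^sup>2) / 2) / s - (\<mu>\<^sup>2 / 2) * s))"
proof -
  have G: "Gamma (\<gamma> / 2) > 0" using \<gamma> by (intro Gamma_real_pos) simp
  have scale: "(2 * s) powr (\<gamma> / 2) = 2 powr (\<gamma> / 2) * s powr (\<gamma> / 2)"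
    using s by (simp add: powr_mult)
  have sqrt_cube: "sqrt (2 * pi * s ^ 3) = sqrt (2 * pi) * s powr (3 / 2)"
    using s by (simp add: real_sqrt_mult powr_half_sqrt_powr powr_realpow)
  have power: "s powr (- (\<gamma> + 3) / 2) = 1 / (s powr (\<gamma> / 2) * s powr (3 / 2))"
  proof -
    have "- (\<gamma> + 3) / 2 = - (\<gamma> / 2 + 3 / 2)" by simp
    thus ?thesis by (simp only: powr_minus_divide powr_add)
  qed
  have exponent: "exp (- r\<^sup>2 / (2 * s)) * exp (- (t - \<mu> * s)\<^sup>2 / (2 * s))
    = exp (t * \<mu>) * exp (- ((r\<^sup>2 + t\<^sup>2) / 2) / s - (\<mu>\<^sup>2 / 2) * s)"
  proof -
    have "- r\<^sup>2 / (2 * s) + - (t - \<mu> * s)\<^sup>2 / (2 * s)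
        = t * \<mu> + (- ((r\<^sup>2 + t\<^sup>2) / 2) / s - (\<mu>\<^sup>2 / 2) * s)"
      using s by (simp add: field_simps power2_eq_square)
    thus ?thesis by (simp flip: exp_add)
  qed
  have "bessel_density \<gamma> s r * fpt_density \<mu> t s
    = 2 * t * r powr (\<gamma> - 1) / (2 powr (\<gamma> / 2) * Gamma (\<gamma> / 2) * sqrt (2 * pi))
      * (1 / (s powr (\<gamma> / 2) * s powr (3 / 2)))
      * (exp (- r\<^sup>2 / (2 * s)) * exp (- (t - \<mu> * s)\<^sup>2 / (2 * s)))"
    unfolding bessel_density_def fpt_density_def scale sqrt_cube using s G by (simp add: field_simps)
  thus ?thesis unfolding exponent power using G by (simp add: field_simps)
qed

theorem mainTheorem10:
  fixes \<gamma> \<mu> t r :: real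
  assumes "\<gamma> > 0" and "\<mu> \<noteq> 0" and "r > 0" and "t > 0"
  shows "((\<lambda>s. bessel_density \<gamma> s r * fpt_density \<mu> t s) has_integral
     (4 * t * exp (t * \<mu>) * r powr (\<gamma> - 1)
       / (2 powr (\<gamma> / 2) * Gamma (\<gamma> / 2) * sqrt (2 * pi))
       * (\<mu>\<^sup>2 / (r\<^sup>2 + t\<^sup>2)) powr ((\<gamma> + 1) / 4)
       * besselK ((\<gamma> + 1) / 2) (\<bar>\<mu>\<bar> * sqrt (r\<^sup>2 + t\<^sup>2)))) {0<..}"
proof -
  define A where "A = r\<^sup>2 + t\<^sup>2"
  define C where "C = 2 * t * exp (t * \<mu>) * r powr (\<gamma> - 1) / (2 powr (\<gamma> / 2) * Gamma (\<gamma> / 2) * sqrt (2 * pi))"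
  have A: "A > 0" using \<open>r > 0\<close> by (simp add: A_def add_pos_nonneg)
  have argument: "2 * sqrt (A / 2 * (\<mu>\<^sup>2 / 2)) = \<bar>\<mu>\<bar> * sqrt A"
    using A by (simp add: real_sqrt_mult real_sqrt_divide mult.commute)
  have order: "- (\<gamma> + 3) / 2 + 1 = - (\<gamma> + 1) / 2" by (simp add: field_simps)
  have "((\<lambda>s. C * (s powr (- (\<gamma> + 3) / 2) * exp (- (A / 2) / s - (\<mu>\<^sup>2 / 2) * s))) has_integral
      C * (2 * (A / \<mu>\<^sup>2) powr (- (\<gamma> + 1) / 4) * besselK (- (\<gamma> + 1) / 2) (\<bar>\<mu>\<bar> * sqrt A))) {0<..}"
    using has_integral_powr_mult_exp_besselK[of "A / 2" "\<mu>\<^sup>2 / 2" "- (\<gamma> + 3) / 2"] A \<open>\<mu> \<noteq> 0\<close>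
    unfolding argument order by (intro has_integral_mult_right) simp
  moreover have "(A / \<mu>\<^sup>2) powr (- (\<gamma> + 1) / 4) = (\<mu>\<^sup>2 / A) powr ((\<gamma> + 1) / 4)"
    by (simp only: minus_divide_left[symmetric] powr_minus inverse_powr[symmetric] inverse_divide)
  moreover have "besselK (- (\<gamma> + 1) / 2) = besselK ((\<gamma> + 1) / 2)"
    by (rule ext) (simp only: minus_divide_left[symmetric] besselK_minus)
  ultimately show ?thesis
    using bessel_density_mult_fpt_density[OF \<open>\<gamma> > 0\<close>]
    by (subst has_integral_eq) (auto simp: A_def C_def mult_ac)
qed

end
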